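(* Let $N_1,N_2,\chi>0$, $\alpha=\pi(\sqrt{N_2/\pi}+N_1/2)^2$, $\beta=\alpha/\sqrt{\pi N_2}$, $\tau=\sqrt{\pi N_2}N_1$, $\rho=1+N_2/\tau$, and let $S(\phi)=\frac{\phi}{\tau}\ln\frac{\alpha\phi}{\tau}+\frac{\phi}{N_1}\ln\frac{\beta\phi}{\tau}+(1-\rho\phi)\ln(1-\rho\phi)$, $H(\phi)=\chi\phi(1-\rho\phi)$, $\kappa(\phi)=\frac{1}{36\phi(1-\phi)}$. For grid functions $\phi\in\mathcal{C}_{\rm per}$ with $0<\phi_{i,j}<1/\rho$ for all $i,j$, define $F(\phi)=h^2\sum_{i,j=1}^N\big(S(\phi_{i,j})+H(\phi_{i,j})+\kappa(\phi_{i,j})(a_x((D_x\phi)^2)_{i,j}+a_y((D_y\phi)^2)_{i,j})\big)$, $F_S(\phi)=h^2\sum_{i,j}S(\phi_{i,j})$, $F_H(\phi)=F_e(\phi)=-h^2\sum_{i,j}H(\phi_{i,j})$, $F_{K_1}(\phi)=h^2\sum_{i,j}(\kappa(\phi_{i,j})-\tfrac1{36})(a_x((D_x\phi)^2)_{i,j}+a_y((D_y\phi)^2)_{i,j})$, $F_{K_2}(\phi)=\frac{1}{36}\|\nabla_h\phi\|_2^2$, and $F_c=F_S+F_{K_1}+F_{K_2}$. Then $$F(\phi)=F_c(\phi)-F_e(\phi)=F_S(\phi)+F_{K_1}(\phi)+F_{K_2}(\phi)-F_H(\phi),$$ and each of $F_c,F_e,F_S,F_{K_1},F_{K_2},F_H$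 is convex (on the convex set of grid functions with values in $(0,1/\rho)$).
   Context: Let $\Omega=(0,L)^2$, $N\in\mathbb{N}$, $h=L/N$. $\mathcal{C}_{\rm per}$ is the space of real grid functions $\nu_{i,j}$, $i,j\in\mathbb{Z}$, that are $N$-periodic in each index (values at cell centers $((i-\frac12)h,(j-\frac12)h)$). For $\nu\in\mathcal{C}_{\rm per}$ define on edges $D_x\nu_{i+1/2,j}=(\nu_{i+1,j}-\nu_{i,j})/h$, $D_y\nu_{i,j+1/2}=(\nu_{i,j+1}-\nu_{i,j})/h$, $A_x\nu_{i+1/2,j}=(\nu_{i+1,j}+\nu_{i,j})/2$ (similarly $A_y$); for edge functions $f$ define $a_xf_{i,j}=(f_{i+1/2,j}+f_{i-1/2,j})/2$, $d_xf_{i,j}=(f_{i+1/2,j}-f_{i-1/2,j})/h$ (similarly $a_y,d_y$). $\|\nabla_h\nu\|_2^2=h^2\sum_{i,j=1}^N\big(a_x((D_x\nu)^2)_{i,j}+a_y((D_y\nu)^2)_{i,j}\big)$. *)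

theory Defs
  imports Complex_Main
begin

text \<open>Grid functions on Z x Z; nu i j is the value at cell centre ((i-1/2)h,(j-1/2)h).
 Edge functions at (i+1/2, j) are indexed by i (resp. (i, j+1/2) by j).\<close>

type_synonym grid = "int \<Rightarrow> int \<Rightarrow> real"

definition per_grid :: "nat \<Rightarrow> grid \<Rightarrow> bool" where
  "per_grid N \<nu> \<longleftrightarrow> (\<forall>i j. \<nu> (i + int N) j = \<nu> i j \<and> \<nu> i (j + int N) = \<nu> i j)"

definition Cper :: "nat \<Rightarrow> grid set" where
  "Cper N = {\<nu>. per_grid N \<nu>}"

definition hstep :: "real \<Rightarrow> nat \<Rightarrow> real" where
  "hstep L N = L / real N"

definition Dx :: "real \<Rightarrow> grid \<Rightarrow> grid" where
  "Dx h \<nu> i j = (\<nu> (i+1) j - \<nu> i j) / h"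
definition Dy :: "real \<Rightarrow> grid \<Rightarrow> grid" where
  "Dy h \<nu> i j = (\<nu> i (j+1) - \<nu> i j) / h"
definition Ax :: "grid \<Rightarrow> grid" where
  "Ax \<nu> i j = (\<nu> (i+1) j + \<nu> i j) / 2"
definition Ay :: "grid \<Rightarrow> grid" where
  "Ay \<nu> i j = (\<nu> i (j+1) + \<nu> i j) / 2"
definition ax :: "grid \<Rightarrow> grid" where
  "ax f i j = (f i j + f (i-1) j) / 2"
definition ay :: "grid \<Rightarrow> grid" where
  "ay f i j = (f i j + f i (j-1)) / 2"
definition dx :: "real \<Rightarrow> grid \<Rightarrow> grid" where
  "dx h f i j = (f i j - f (i-1) j) / h"
definition dy :: "real \<Rightarrow> grid \<Rightarrow> grid" where
  "dy h f i j = (f i j - f i (j-1)) / h"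

definition gsum :: "nat \<Rightarrow> (int \<Rightarrow> int \<Rightarrow> real) \<Rightarrow> real" where
  "gsum N g = (\<Sum>i\<in>{1..int N}. \<Sum>j\<in>{1..int N}. g i j)"

definition gradsq :: "real \<Rightarrow> grid \<Rightarrow> grid" where
  "gradsq h \<nu> i j = ax (\<lambda>a b. (Dx h \<nu> a b)^2) i j + ay (\<lambda>a b. (Dy h \<nu> a b)^2) i j"

definition grad_norm_sq :: "real \<Rightarrow> nat \<Rightarrow> grid \<Rightarrow> real" where
  "grad_norm_sq L N \<nu> = (hstep L N)^2 *
     gsum N (\<lambda>i j. ax (\<lambda>a b. (Dx (hstep L N) \<nu> a b)^2) i j + ay (\<lambda>a b. (Dy (hstep L N) \<nu> a b)^2) i j)"

definition alpha :: "real \<Rightarrow> real \<Rightarrow> real" where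
  "alpha N1 N2 = pi * (sqrt (N2 / pi) + N1 / 2)^2"
definition beta :: "real \<Rightarrow> real \<Rightarrow> real" where
  "beta N1 N2 = alpha N1 N2 / sqrt (pi * N2)"
definition tau :: "real \<Rightarrow> real \<Rightarrow> real" where
  "tau N1 N2 = sqrt (pi * N2) * N1"
definition rho :: "real \<Rightarrow> real \<Rightarrow> real" where
  "rho N1 N2 = 1 + N2 / tau N1 N2"

definition Sfun :: "real \<Rightarrow> real \<Rightarrow> real \<Rightarrow> real" where
  "Sfun N1 N2 \<phi> =
     \<phi> / tau N1 N2 * ln (alpha N1 N2 * \<phi> / tau N1 N2)
   + \<phi> / N1 * ln (beta N1 N2 * \<phi> / tau N1 N2)
   + (1 - rho N1 N2 * \<phi>) * ln (1 - rho N1 N2 * \<phi>)"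
definition Hfun :: "real \<Rightarrow> real \<Rightarrow> real \<Rightarrow> real \<Rightarrow> real" where
  "Hfun N1 N2 \<chi> \<phi> = \<chi> * \<phi> * (1 - rho N1 N2 * \<phi>)"
definition kappa :: "real \<Rightarrow> real" where
  "kappa \<phi> = 1 / (36 * \<phi> * (1 - \<phi>))"

definition Adm :: "real \<Rightarrow> real \<Rightarrow> nat \<Rightarrow> grid set" where
  "Adm N1 N2 N = {\<phi> \<in> Cper N. \<forall>i j. 0 < \<phi> i j \<and> \<phi> i j < 1 / rho N1 N2}"

definition Fen :: "real \<Rightarrow> real \<Rightarrow> real \<Rightarrow> real \<Rightarrow> nat \<Rightarrow> grid \<Rightarrow> real" where
  "Fen N1 N2 \<chi> L N \<phi> = (hstep L N)^2 * gsum N (\<lambda>i j.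
      Sfun N1 N2 (\<phi> i j) + Hfun N1 N2 \<chi> (\<phi> i j) + kappa (\<phi> i j) * gradsq (hstep L N) \<phi> i j)"
definition FS :: "real \<Rightarrow> real \<Rightarrow> real \<Rightarrow> nat \<Rightarrow> grid \<Rightarrow> real" where
  "FS N1 N2 L N \<phi> = (hstep L N)^2 * gsum N (\<lambda>i j. Sfun N1 N2 (\<phi> i j))"
definition FH :: "real \<Rightarrow> real \<Rightarrow> real \<Rightarrow> real \<Rightarrow> nat \<Rightarrow> grid \<Rightarrow> real" where
  "FH N1 N2 \<chi> L N \<phi> = - ((hstep L N)^2 * gsum N (\<lambda>i j. Hfun N1 N2 \<chi> (\<phi> i j)))"
definition Fe :: "real \<Rightarrow> real \<Rightarrow> real \<Rightarrow> real \<Rightarrow> nat \<Rightarrow> grid \<Rightarrow> real" where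
  "Fe N1 N2 \<chi> L N \<phi> = - ((hstep L N)^2 * gsum N (\<lambda>i j. Hfun N1 N2 \<chi> (\<phi> i j)))"
definition FK1 :: "real \<Rightarrow> nat \<Rightarrow> grid \<Rightarrow> real" where
  "FK1 L N \<phi> = (hstep L N)^2 * gsum N (\<lambda>i j. (kappa (\<phi> i j) - 1/36) * gradsq (hstep L N) \<phi> i j)"
definition FK2 :: "real \<Rightarrow> nat \<Rightarrow> grid \<Rightarrow> real" where
  "FK2 L N \<phi> = 1/36 * grad_norm_sq L N \<phi>"
definition Fc :: "real \<Rightarrow> real \<Rightarrow> real \<Rightarrow> nat \<Rightarrow> grid \<Rightarrow> real" where
  "Fc N1 N2 L N \<phi> = FS N1 N2 L N \<phi> + FK1 L N \<phi> + FK2 L N \<phi>"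

definition convex_grid_set :: "grid set \<Rightarrow> bool" where
  "convex_grid_set D \<longleftrightarrow> (\<forall>\<phi>\<in>D. \<forall>\<psi>\<in>D. \<forall>t::real. 0 \<le> t \<and> t \<le> 1 \<longrightarrow>
      (\<lambda>i j. (1 - t) * \<phi> i j + t * \<psi> i j) \<in> D)"
definition convex_grid_fun :: "grid set \<Rightarrow> (grid \<Rightarrow> real) \<Rightarrow> bool" where
  "convex_grid_fun D F \<longleftrightarrow> (\<forall>\<phi>\<in>D. \<forall>\<psi>\<in>D. \<forall>t::real. 0 \<le> t \<and> t \<le> 1 \<longrightarrow>
      F (\<lambda>i j. (1 - t) * \<phi> i j + t * \<psi> i j) \<le> (1 - t) * F \<phi> + t * F \<psi>)"

end

(*
  The energy splits pointwise, so the two identities are bookkeeping, and every functional is a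
  nonnegative multiple of a grid sum whose integrand is convex along segments of grid functions.
  S is convex on (0, 1/rho) because each of its three terms is y ln y in a variable affine in phi,
  and -H is an upward parabola. The gradient terms are averages of w(phi_ij) d^2 with d a
  difference quotient, linear in phi, and (x, d) |-> w x d^2 is jointly convex whenever 1/w is
  concave and positive: for K1, 1/(kappa x - 1/36) = 36/(1 - x + x^2) - 36 is concave on (0, 1),
  which contains (0, 1/rho); for K2, w = 1/36 is constant.
*)
theory Submission
  imports Defs "HOL-Analysis.Convex"
begin

lemma concave_on_cong:
  assumes "\<And>x. x \<in> S \<Longrightarrow> f x = g x"
  shows "concave_on S f \<longleftrightarrow> concave_on S g"
proof -
  have "f (u *\<^sub>R x + v *\<^sub>R y) = g (u *\<^sub>R x + v *\<^sub>R y)"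
    if "convex S" "x \<in> S" "y \<in> S" "0 \<le> u" "0 \<le> v" "u + v = 1" for x y and u v :: real
    using that by (intro assms convexD) auto
  then show ?thesis
    using assms unfolding concave_on_iff by (smt (verit))
qed

lemma convex_on_mult_ln:
  fixes a c :: real
  assumes "0 < a" "0 \<le> c"
  shows "convex_on {0<..} (\<lambda>x. c * x * ln (a * x))"
proof (rule f''_ge0_imp_convex)
  fix x :: real assume x: "x \<in> {0<..}"
  show "((\<lambda>x. c * x * ln (a * x)) has_real_derivative c * (ln (a * x) + 1)) (at x)"
    using assms x by (auto intro!: derivative_eq_intros simp: field_simps)
  show "((\<lambda>x. c * (ln (a * x) + 1)) has_real_derivative c / x) (at x)"
    using assms x by (auto intro!: derivative_eq_intros simp: field_simps)
  show "0 \<le> c / x" using assms x by simp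
qed simp

lemma convex_on_one_minus_mult_ln:
  fixes r :: real
  shows "convex_on {x. r * x < 1} (\<lambda>x. (1 - r * x) * ln (1 - r * x))"
proof (rule f''_ge0_imp_convex)
  fix x :: real assume x: "x \<in> {x. r * x < 1}"
  show "((\<lambda>x. (1 - r * x) * ln (1 - r * x)) has_real_derivative - r * (ln (1 - r * x) + 1)) (at x)"
    using x by (auto intro!: derivative_eq_intros simp: divide_simps) (simp add: algebra_simps)
  show "((\<lambda>x. - r * (ln (1 - r * x) + 1)) has_real_derivative r\<^sup>2 / (1 - r * x)) (at x)"
    using x by (auto intro!: derivative_eq_intros simp: field_simps power2_eq_square)
  show "0 \<le> r\<^sup>2 / (1 - r * x)" using x by simp
qed (use convex_halfspace_lt[of r 1] in simp)

lemma concave_on_mult_one_minus: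
  fixes c r :: real
  assumes "0 \<le> c * r"
  shows "concave_on UNIV (\<lambda>x. c * x * (1 - r * x))"
proof (rule f''_le0_imp_concave)
  fix x :: real
  show "((\<lambda>x. c * x * (1 - r * x)) has_real_derivative c - 2 * c * r * x) (at x)"
    by (auto intro!: derivative_eq_intros simp: algebra_simps)
  show "((\<lambda>x. c - 2 * c * r * x) has_real_derivative - 2 * (c * r)) (at x)"
    by (auto intro!: derivative_eq_intros)
  show "- 2 * (c * r) \<le> 0" using assms by simp
qed simp

lemma power2_div_convex_comb_le:
  fixes q1 q2 d1 d2 t :: real
  assumes "0 < q1" "0 < q2" "0 \<le> t" "t \<le> 1"
  shows "((1 - t) * d1 + t * d2)\<^sup>2 / ((1 - t) * q1 + t * q2) \<le> (1 - t) * d1\<^sup>2 / q1 + t * d2\<^sup>2 / q2"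
proof -
  have Q: "0 < (1 - t) * q1 + t * q2"
    using assms by (cases "t = 0") (auto intro: add_nonneg_pos add_pos_nonneg)
  have "(1 - t) * d1\<^sup>2 / q1 + t * d2\<^sup>2 / q2 - ((1 - t) * d1 + t * d2)\<^sup>2 / ((1 - t) * q1 + t * q2)
      = (1 - t) * t * (d1 * q2 - d2 * q1)\<^sup>2 / (q1 * q2 * ((1 - t) * q1 + t * q2))"
    using assms Q by (simp add: field_simps power2_eq_square)
  also have "\<dots> \<ge> 0"
    using assms Q by (intro divide_nonneg_pos mult_nonneg_nonneg) auto
  finally show ?thesis by simp
qed

(* The perspective (d, q) |-> d^2 / q is jointly convex and nonincreasing in q > 0;
   composing it with the concave function 1 / w gives the claim. *)
lemma convex_on_weighted_square:
  fixes w :: "'a::real_vector \<Rightarrow> real"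
  assumes concave: "concave_on S (\<lambda>x. 1 / w x)" and pos: "\<And>x. x \<in> S \<Longrightarrow> 0 < w x"
  shows "convex_on (S \<times> UNIV) (\<lambda>(x, d). w x * d\<^sup>2)"
proof (rule convex_onI)
  show "convex (S \<times> (UNIV :: real set))"
    using concave_on_imp_convex[OF concave] by (simp add: convex_Times)
  fix t :: real and p1 p2 :: "'a \<times> real"
  assume t: "0 < t" "t < 1" and p: "p1 \<in> S \<times> UNIV" "p2 \<in> S \<times> UNIV"
  obtain x1 d1 x2 d2 where p_eq: "p1 = (x1, d1)" "p2 = (x2, d2)" and x: "x1 \<in> S" "x2 \<in> S"
    using p by auto
  define x where "x = (1 - t) *\<^sub>R x1 + t *\<^sub>R x2"
  define d where "d = (1 - t) * d1 + t * d2"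
  define Q where "Q = (1 - t) * (1 / w x1) + t * (1 / w x2)"
  have "x \<in> S"
    unfolding x_def using x t concave_on_imp_convex[OF concave] by (intro convexD) auto
  have "0 < Q"
    unfolding Q_def using t pos[OF x(1)] pos[OF x(2)] by (intro add_pos_pos) auto
  have Q_le: "Q \<le> 1 / w x"
    unfolding Q_def x_def using concave_onD[OF concave] t x by simp
  have "w x * d\<^sup>2 = d\<^sup>2 / (1 / w x)"
    by simp
  also have "\<dots> \<le> d\<^sup>2 / Q"
    using \<open>0 < Q\<close> Q_le pos[OF \<open>x \<in> S\<close>] by (intro divide_left_mono mult_pos_pos) auto
  also have "\<dots> \<le> (1 - t) * d1\<^sup>2 / (1 / w x1) + t * d2\<^sup>2 / (1 / w x2)"
    unfolding d_def Q_def using t pos[OF x(1)] pos[OF x(2)]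
    by (intro power2_div_convex_comb_le) auto
  finally show "(\<lambda>(x, d). w x * d\<^sup>2) ((1 - t) *\<^sub>R p1 + t *\<^sub>R p2)
      \<le> (1 - t) * (\<lambda>(x, d). w x * d\<^sup>2) p1 + t * (\<lambda>(x, d). w x * d\<^sup>2) p2"
    unfolding p_eq x_def d_def by (simp add: mult_ac)
qed

lemma tau_pos: "0 < N1 \<Longrightarrow> 0 < N2 \<Longrightarrow> 0 < tau N1 N2"
  by (simp add: tau_def)

lemma alpha_pos: "0 < N1 \<Longrightarrow> 0 < N2 \<Longrightarrow> 0 < alpha N1 N2"
  unfolding alpha_def by (intro mult_pos_pos pi_gt_zero zero_less_power add_nonneg_pos) auto

lemma beta_pos: "0 < N1 \<Longrightarrow> 0 < N2 \<Longrightarrow> 0 < beta N1 N2"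
  by (simp add: beta_def alpha_pos)

lemma rho_gt_one: "0 < N1 \<Longrightarrow> 0 < N2 \<Longrightarrow> 1 < rho N1 N2"
  by (simp add: rho_def tau_pos)

lemma convex_on_Sfun:
  assumes "0 < N1" "0 < N2"
  shows "convex_on {0<..<1 / rho N1 N2} (Sfun N1 N2)"
proof -
  let ?I = "{0<..<1 / rho N1 N2}"
  have \<tau>: "0 < tau N1 N2" and \<rho>: "0 < rho N1 N2"
    using tau_pos[OF assms] rho_gt_one[OF assms] by simp_all
  have "Sfun N1 N2 = (\<lambda>x. 1 / tau N1 N2 * x * ln (alpha N1 N2 / tau N1 N2 * x)
      + 1 / N1 * x * ln (beta N1 N2 / tau N1 N2 * x) + (1 - rho N1 N2 * x) * ln (1 - rho N1 N2 * x))"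
    by (simp add: Sfun_def fun_eq_iff)
  moreover have "convex_on ?I (\<lambda>x. 1 / tau N1 N2 * x * ln (alpha N1 N2 / tau N1 N2 * x))"
    using \<tau> alpha_pos[OF assms] by (intro convex_on_subset[OF convex_on_mult_ln])
      (auto simp: convex_real_interval)
  moreover have "convex_on ?I (\<lambda>x. 1 / N1 * x * ln (beta N1 N2 / tau N1 N2 * x))"
    using \<tau> beta_pos[OF assms] assms by (intro convex_on_subset[OF convex_on_mult_ln])
      (auto simp: convex_real_interval)
  moreover have "convex_on ?I (\<lambda>x. (1 - rho N1 N2 * x) * ln (1 - rho N1 N2 * x))"
    using \<rho> by (intro convex_on_subset[OF convex_on_one_minus_mult_ln])
      (auto simp: convex_real_interval field_simps)
  ultimately show ?thesis
    by (simp add: convex_on_add)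
qed

lemma kappa_excess_pos:
  assumes "0 < x" "x < 1"
  shows "0 < kappa x - 1/36"
proof -
  have "x * (1 - x) < 1" using assms mult_strict_mono[of x 1 "1 - x" 1] by simp
  moreover have "0 < x * (1 - x)" using assms by simp
  ultimately show ?thesis unfolding kappa_def by (simp add: mult.assoc)
qed

lemma inverse_kappa_excess_eq:
  assumes "0 < x" "x < 1"
  shows "1 / (kappa x - 1/36) = 36 / (x\<^sup>2 - x + 1) - 36"
proof -
  have p: "0 < x * (1 - x)" "x * (1 - x) < 1" using assms mult_strict_mono[of x 1 "1 - x" 1] by auto
  have "1 / (1 / (36 * p) - 1/36) = 36 / (1 - p) - 36" if "0 < p" "p < 1" for p :: real
    using that by (simp add: field_simps)
  moreover have "kappa x = 1 / (36 * (x * (1 - x)))" unfolding kappa_def by (simp add: mult.assoc)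
  moreover have "x\<^sup>2 - x + 1 = 1 - x * (1 - x)" by (simp add: algebra_simps power2_eq_square)
  ultimately show ?thesis using p by simp
qed

lemma concave_on_inverse_kappa_excess:
  "concave_on {0<..<1} (\<lambda>x. 1 / (kappa x - 1/36))"
proof -
  have r_pos: "0 < x\<^sup>2 - x + 1" for x :: real
    using zero_le_power2[of "x - 1/2"] by (simp add: power2_eq_square algebra_simps)
  have "concave_on {0<..<1} (\<lambda>x::real. 36 / (x\<^sup>2 - x + 1) - 36)"
  proof (rule f''_le0_imp_concave)
    fix x :: real assume x: "x \<in> {0<..<1}"
    have r: "x\<^sup>2 - x + 1 \<noteq> 0" using r_pos[of x] by simp
    show "((\<lambda>x. 36 / (x\<^sup>2 - x + 1) - 36) has_real_derivative - 36 * (2 * x - 1) / (x\<^sup>2 - x + 1)\<^sup>2) (at x)"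
      using r by (auto intro!: derivative_eq_intros simp: field_simps power2_eq_square)
    show "((\<lambda>x. - 36 * (2 * x - 1) / (x\<^sup>2 - x + 1)\<^sup>2) has_real_derivative
        - 216 * x * (1 - x) / (x\<^sup>2 - x + 1) ^ 3) (at x)"
      using r by (auto intro!: derivative_eq_intros simp: divide_simps) algebra
    show "- 216 * x * (1 - x) / (x\<^sup>2 - x + 1) ^ 3 \<le> 0"
      using x r_pos[of x] by (simp add: divide_nonpos_pos)
  qed simp
  moreover have "concave_on {0<..<1} (\<lambda>x. 1 / (kappa x - 1/36)) \<longleftrightarrow>
      concave_on {0<..<1} (\<lambda>x::real. 36 / (x\<^sup>2 - x + 1) - 36)"
    by (rule concave_on_cong) (simp add: inverse_kappa_excess_eq)
  ultimately show ?thesis by simp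
qed

lemma Dx_convex_comb:
  "Dx h (\<lambda>i j. (1 - t) * \<phi> i j + t * \<psi> i j) a b = (1 - t) * Dx h \<phi> a b + t * Dx h \<psi> a b"
  by (simp add: Dx_def algebra_simps diff_divide_distrib add_divide_distrib)

lemma Dy_convex_comb:
  "Dy h (\<lambda>i j. (1 - t) * \<phi> i j + t * \<psi> i j) a b = (1 - t) * Dy h \<phi> a b + t * Dy h \<psi> a b"
  by (simp add: Dy_def algebra_simps diff_divide_distrib add_divide_distrib)

lemma weighted_gradsq_convex_comb_le:
  assumes w: "convex_on (I \<times> UNIV) (\<lambda>(x, d). w x * d\<^sup>2)"
    and "\<phi> i j \<in> I" "\<psi> i j \<in> I" "0 \<le> t" "t \<le> 1"
  shows "w ((1 - t) * \<phi> i j + t * \<psi> i j) * gradsq h (\<lambda>i j. (1 - t) * \<phi> i j + t * \<psi> i j) i j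
    \<le> (1 - t) * (w (\<phi> i j) * gradsq h \<phi> i j) + t * (w (\<psi> i j) * gradsq h \<psi> i j)"
proof -
  have edge: "w ((1 - t) * \<phi> i j + t * \<psi> i j) * ((1 - t) * d1 + t * d2)\<^sup>2
      \<le> (1 - t) * (w (\<phi> i j) * d1\<^sup>2) + t * (w (\<psi> i j) * d2\<^sup>2)" for d1 d2
    using convex_onD[OF w, of t "(\<phi> i j, d1)" "(\<psi> i j, d2)"] assms by simp
  have expand: "w x * gradsq h f i j = (w x * (Dx h f i j)\<^sup>2 + w x * (Dx h f (i - 1) j)\<^sup>2
      + w x * (Dy h f i j)\<^sup>2 + w x * (Dy h f i (j - 1))\<^sup>2) / 2" for x f
    unfolding gradsq_def ax_def ay_def by (simp add: field_simps)
  let ?\<chi> = "\<lambda>i j. (1 - t) * \<phi> i j + t * \<psi> i j"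
  have "w (?\<chi> i j) * gradsq h ?\<chi> i j
      \<le> ((1 - t) * (w (\<phi> i j) * (Dx h \<phi> i j)\<^sup>2) + t * (w (\<psi> i j) * (Dx h \<psi> i j)\<^sup>2)
        + ((1 - t) * (w (\<phi> i j) * (Dx h \<phi> (i - 1) j)\<^sup>2) + t * (w (\<psi> i j) * (Dx h \<psi> (i - 1) j)\<^sup>2))
        + ((1 - t) * (w (\<phi> i j) * (Dy h \<phi> i j)\<^sup>2) + t * (w (\<psi> i j) * (Dy h \<psi> i j)\<^sup>2))
        + ((1 - t) * (w (\<phi> i j) * (Dy h \<phi> i (j - 1))\<^sup>2) + t * (w (\<psi> i j) * (Dy h \<psi> i (j - 1))\<^sup>2))) / 2"
    unfolding expand Dx_convex_comb Dy_convex_comb by (intro divide_right_mono add_mono edge) simp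
  also have "\<dots> = (1 - t) * (w (\<phi> i j) * gradsq h \<phi> i j) + t * (w (\<psi> i j) * gradsq h \<psi> i j)"
    unfolding expand by (simp add: field_simps)
  finally show ?thesis .
qed

lemma convex_grid_fun_scaled_gsum:
  assumes "0 \<le> c"
    and "\<And>\<phi> \<psi> t i j. \<phi> \<in> D \<Longrightarrow> \<psi> \<in> D \<Longrightarrow> 0 \<le> t \<Longrightarrow> t \<le> 1 \<Longrightarrow>
      T (\<lambda>i j. (1 - t) * \<phi> i j + t * \<psi> i j) i j \<le> (1 - t) * T \<phi> i j + t * T \<psi> i j"
  shows "convex_grid_fun D (\<lambda>\<phi>. c * gsum N (T \<phi>))"
  unfolding convex_grid_fun_def
proof (intro ballI allI impI)
  fix \<phi> \<psi> and t :: real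
  assume "\<phi> \<in> D" "\<psi> \<in> D" "0 \<le> t \<and> t \<le> 1"
  then have "gsum N (T (\<lambda>i j. (1 - t) * \<phi> i j + t * \<psi> i j))
      \<le> gsum N (\<lambda>i j. (1 - t) * T \<phi> i j + t * T \<psi> i j)"
    unfolding gsum_def using assms(2) by (intro sum_mono) auto
  also have "\<dots> = (1 - t) * gsum N (T \<phi>) + t * gsum N (T \<psi>)"
    by (simp add: gsum_def sum.distrib sum_distrib_left)
  finally have "gsum N (T (\<lambda>i j. (1 - t) * \<phi> i j + t * \<psi> i j))
      \<le> (1 - t) * gsum N (T \<phi>) + t * gsum N (T \<psi>)" .
  from mult_left_mono[OF this assms(1)]
  show "c * gsum N (T (\<lambda>i j. (1 - t) * \<phi> i j + t * \<psi> i j))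
      \<le> (1 - t) * (c * gsum N (T \<phi>)) + t * (c * gsum N (T \<psi>))"
    by (simp add: algebra_simps)
qed

lemma convex_grid_fun_gsum_comp:
  assumes f: "convex_on I f" and "0 \<le> c" and "\<And>\<phi> i j. \<phi> \<in> D \<Longrightarrow> \<phi> i j \<in> I"
  shows "convex_grid_fun D (\<lambda>\<phi>. c * gsum N (\<lambda>i j. f (\<phi> i j)))"
  using convex_grid_fun_scaled_gsum[of c D "\<lambda>\<phi> i j. f (\<phi> i j)"] convex_onD[OF f] assms(2,3)
  by simp

lemma convex_grid_fun_gsum_weighted_gradsq:
  assumes "convex_on (I \<times> UNIV) (\<lambda>(x, d). w x * d\<^sup>2)"
    and "0 \<le> c" and "\<And>\<phi> i j. \<phi> \<in> D \<Longrightarrow> \<phi> i j \<in> I"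
  shows "convex_grid_fun D (\<lambda>\<phi>. c * gsum N (\<lambda>i j. w (\<phi> i j) * gradsq h \<phi> i j))"
  using assms by (intro convex_grid_fun_scaled_gsum weighted_gradsq_convex_comb_le) auto

lemma convex_grid_fun_add:
  assumes "convex_grid_fun D F" "convex_grid_fun D G"
  shows "convex_grid_fun D (\<lambda>\<phi>. F \<phi> + G \<phi>)"
  unfolding convex_grid_fun_def
proof (intro ballI allI impI)
  fix \<phi> \<psi> and t :: real
  assume "\<phi> \<in> D" "\<psi> \<in> D" "0 \<le> t \<and> t \<le> 1"
  then have "F (\<lambda>i j. (1 - t) * \<phi> i j + t * \<psi> i j) \<le> (1 - t) * F \<phi> + t * F \<psi>"
    and "G (\<lambda>i j. (1 - t) * \<phi> i j + t * \<psi> i j) \<le> (1 - t) * G \<phi> + t * G \<psi>"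
    using assms unfolding convex_grid_fun_def by blast+
  then show "F (\<lambda>i j. (1 - t) * \<phi> i j + t * \<psi> i j) + G (\<lambda>i j. (1 - t) * \<phi> i j + t * \<psi> i j)
      \<le> (1 - t) * (F \<phi> + G \<phi>) + t * (F \<psi> + G \<psi>)"
    by (simp add: algebra_simps)
qed

lemma Adm_values: "\<phi> \<in> Adm N1 N2 N \<Longrightarrow> \<phi> i j \<in> {0<..<1 / rho N1 N2}"
  by (simp add: Adm_def)

lemma convex_grid_set_Adm: "convex_grid_set (Adm N1 N2 N)"
  unfolding convex_grid_set_def
proof (intro ballI allI impI)
  fix \<phi> \<psi> and t :: real
  assume \<phi>: "\<phi> \<in> Adm N1 N2 N" and \<psi>: "\<psi> \<in> Adm N1 N2 N" and t: "0 \<le> t \<and> t \<le> 1"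
  have "(1 - t) * \<phi> i j + t * \<psi> i j \<in> {0<..<1 / rho N1 N2}" for i j
    using convexD[OF _ Adm_values[OF \<phi>] Adm_values[OF \<psi>], of "1 - t" t] t
    by (simp add: convex_real_interval)
  moreover have "per_grid N (\<lambda>i j. (1 - t) * \<phi> i j + t * \<psi> i j)"
    using \<phi> \<psi> by (simp add: Adm_def Cper_def per_grid_def)
  ultimately show "(\<lambda>i j. (1 - t) * \<phi> i j + t * \<psi> i j) \<in> Adm N1 N2 N"
    by (simp add: Adm_def Cper_def)
qed

lemma Fen_decomposition:
  "Fen N1 N2 \<chi> L N \<phi> = FS N1 N2 L N \<phi> + FK1 L N \<phi> + FK2 L N \<phi> - FH N1 N2 \<chi> L N \<phi>"
proof -
  let ?h = "hstep L N"
  have pointwise: "Sfun N1 N2 (\<phi> i j) + Hfun N1 N2 \<chi> (\<phi> i j) + kappa (\<phi> i j) * gradsq ?h \<phi> i j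
      = Sfun N1 N2 (\<phi> i j) + (kappa (\<phi> i j) - 1/36) * gradsq ?h \<phi> i j
        + 1/36 * gradsq ?h \<phi> i j + Hfun N1 N2 \<chi> (\<phi> i j)" for i j
    by (simp add: algebra_simps)
  have "gsum N (\<lambda>i j. Sfun N1 N2 (\<phi> i j) + Hfun N1 N2 \<chi> (\<phi> i j) + kappa (\<phi> i j) * gradsq ?h \<phi> i j)
      = gsum N (\<lambda>i j. Sfun N1 N2 (\<phi> i j)) + gsum N (\<lambda>i j. (kappa (\<phi> i j) - 1/36) * gradsq ?h \<phi> i j)
        + 1/36 * gsum N (gradsq ?h \<phi>) + gsum N (\<lambda>i j. Hfun N1 N2 \<chi> (\<phi> i j))"
    unfolding pointwise gsum_def by (simp add: sum.distrib sum_distrib_left)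
  moreover have "grad_norm_sq L N \<phi> = ?h\<^sup>2 * gsum N (gradsq ?h \<phi>)"
    unfolding grad_norm_sq_def gradsq_def ..
  ultimately show ?thesis
    unfolding Fen_def FS_def FK1_def FK2_def FH_def by (simp add: algebra_simps)
qed

lemma convex_grid_fun_FS:
  assumes "0 < N1" "0 < N2"
  shows "convex_grid_fun (Adm N1 N2 N) (FS N1 N2 L N)"
  unfolding FS_def
  by (intro convex_grid_fun_gsum_comp[OF convex_on_Sfun[OF assms]] Adm_values) simp

lemma convex_grid_fun_FH:
  assumes "0 < N1" "0 < N2" "0 \<le> \<chi>"
  shows "convex_grid_fun D (FH N1 N2 \<chi> L N)"
proof -
  have "convex_on UNIV (\<lambda>x. - Hfun N1 N2 \<chi> x)"
    using concave_on_mult_one_minus[of \<chi> "rho N1 N2"] rho_gt_one[OF assms(1,2)] assms(3)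
    unfolding Hfun_def concave_on_def by simp
  then have "convex_grid_fun D (\<lambda>\<phi>. (hstep L N)\<^sup>2 * gsum N (\<lambda>i j. - Hfun N1 N2 \<chi> (\<phi> i j)))"
    by (rule convex_grid_fun_gsum_comp) simp_all
  then show ?thesis
    by (simp add: FH_def[abs_def] gsum_def sum_negf)
qed

lemma convex_grid_fun_FK1:
  assumes "0 < N1" "0 < N2"
  shows "convex_grid_fun (Adm N1 N2 N) (FK1 L N)"
proof -
  have weight: "convex_on ({0<..<1} \<times> UNIV) (\<lambda>(x, d). (kappa x - 1/36) * d\<^sup>2)"
    using concave_on_inverse_kappa_excess kappa_excess_pos
    by (intro convex_on_weighted_square) auto
  have "1 / rho N1 N2 < 1"
    using rho_gt_one[OF assms] by simp
  then have in_unit_interval: "\<phi> i j \<in> {0<..<1}" if "\<phi> \<in> Adm N1 N2 N" for \<phi> i j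
    using Adm_values[OF that, of i j] by auto
  show ?thesis
    unfolding FK1_def
    by (rule convex_grid_fun_gsum_weighted_gradsq[OF weight]) (simp, erule in_unit_interval)
qed

lemma convex_grid_fun_FK2: "convex_grid_fun D (FK2 L N)"
proof -
  have weight: "convex_on (UNIV \<times> UNIV) (\<lambda>(x::real, d). 1/36 * d\<^sup>2)"
    by (rule convex_on_weighted_square[where w = "\<lambda>_. 1/36"]) (simp_all add: concave_on_const)
  have "FK2 L N = (\<lambda>\<phi>. (hstep L N)\<^sup>2 * gsum N (\<lambda>i j. 1/36 * gradsq (hstep L N) \<phi> i j))"
    by (simp add: fun_eq_iff FK2_def grad_norm_sq_def gradsq_def gsum_def sum_distrib_left)
  then show ?thesis
    by (simp only:) (rule convex_grid_fun_gsum_weighted_gradsq[where w = "\<lambda>_. 1/36", OF weight]; simp)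
qed

theorem lemma3p2:
  fixes N1 N2 \<chi> L :: real and N :: nat
  assumes "N1 > 0" and "N2 > 0" and "\<chi> > 0" and "L > 0" and "N > 0"
  shows "(\<forall>\<phi>\<in>Adm N1 N2 N.
            Fen N1 N2 \<chi> L N \<phi> = Fc N1 N2 L N \<phi> - Fe N1 N2 \<chi> L N \<phi> \<and>
            Fen N1 N2 \<chi> L N \<phi> = FS N1 N2 L N \<phi> + FK1 L N \<phi> + FK2 L N \<phi> - FH N1 N2 \<chi> L N \<phi>)
       \<and> convex_grid_set (Adm N1 N2 N)
       \<and> convex_grid_fun (Adm N1 N2 N) (Fc N1 N2 L N)
       \<and> convex_grid_fun (Adm N1 N2 N) (Fe N1 N2 \<chi> L N)
       \<and> convex_grid_fun (Adm N1 N2 N) (FS N1 N2 L N)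
       \<and> convex_grid_fun (Adm N1 N2 N) (FK1 L N)
       \<and> convex_grid_fun (Adm N1 N2 N) (FK2 L N)
       \<and> convex_grid_fun (Adm N1 N2 N) (FH N1 N2 \<chi> L N)"
proof -
  have Fe_eq_FH: "Fe N1 N2 \<chi> L N = FH N1 N2 \<chi> L N"
    by (simp add: fun_eq_iff Fe_def FH_def)
  have FS: "convex_grid_fun (Adm N1 N2 N) (FS N1 N2 L N)"
    and FK1: "convex_grid_fun (Adm N1 N2 N) (FK1 L N)"
    and FH: "convex_grid_fun (Adm N1 N2 N) (FH N1 N2 \<chi> L N)"
    using assms by (simp_all add: convex_grid_fun_FS convex_grid_fun_FK1 convex_grid_fun_FH)
  have "convex_grid_fun (Adm N1 N2 N) (Fc N1 N2 L N)"
    unfolding Fc_def[abs_def]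
    by (intro convex_grid_fun_add FS FK1 convex_grid_fun_FK2)
  then show ?thesis
    using FS FK1 FH convex_grid_fun_FK2 convex_grid_set_Adm
    by (simp add: Fen_decomposition Fc_def Fe_eq_FH)
qed

end
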